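(* Let $\rho$ be a positive integer and $v$ an integer with $v \ge \frac{1}{2}(27\rho^2 - 3\rho + 60)$. Then every $(v,4)$-packing in which the maximum partial parallel class has size $\rho$ has at most \[ \frac{\rho v}{3} - \frac{\rho(\rho+1)}{6} \] blocks.
   Context: For integers $v \ge k \ge 2$, a $(v,k)$-packing is a pair $(X,\mathcal{B})$ where $X$ is a set of $v$ points and $\mathcal{B}$ is a set of $k$-subsets of $X$ (blocks) such that every pair of distinct points lies in at most one block. A partial parallel class (PPC) is a set of pairwise disjoint blocks; its size is the number of blocks. "The maximum PPC has size $\rho$" means the packing has a PPC of size $\rho$ but none of size $\rho+1$. *)

theory Defs
  imports Complex_Main
begin

definition packing :: "nat \<Rightarrow> nat \<Rightarrow> 'a set \<Rightarrow> 'a set set \<Rightarrow> bool" where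
  "packing v k X \<B> \<longleftrightarrow> finite X \<and> card X = v \<and> 2 \<le> k \<and> k \<le> v \<and>
     (\<forall>B\<in>\<B>. B \<subseteq> X \<and> card B = k) \<and>
     (\<forall>x\<in>X. \<forall>y\<in>X. x \<noteq> y \<longrightarrow> card {B\<in>\<B>. x \<in> B \<and> y \<in> B} \<le> 1)"

definition ppc :: "'a set set \<Rightarrow> 'a set set \<Rightarrow> bool" where
  "ppc \<B> P \<longleftrightarrow> P \<subseteq> \<B> \<and> (\<forall>B\<in>P. \<forall>C\<in>P. B \<noteq> C \<longrightarrow> B \<inter> C = {})"

definition max_ppc_size :: "'a set set \<Rightarrow> nat \<Rightarrow> bool" where
  "max_ppc_size \<B> \<rho> \<longleftrightarrow> (\<exists>P. ppc \<B> P \<and> finite P \<and> card P = \<rho>) \<and>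
     \<not> (\<exists>P. ppc \<B> P \<and> finite P \<and> card P = \<rho> + 1)"

end

theory Submission
  imports Defs
begin

(* Fix a maximum partial parallel class P and let U (covered) be the union of its blocks.
   By maximality every block meets U, and for j in P the blocks B with B \<inter> U \<subseteq> j
   pairwise intersect, since two disjoint ones could replace j. A pairwise intersecting linear
   family of 4-sets is either a star or has at most 13 members; call j large if its family is a
   star with at least 14 members, and let S (centres) be the set of centres of the large blocks.
   The blocks meeting S are bounded by double counting incidences with S. A block B missing S
   meets a small block of P: otherwise the large blocks met by B can be replaced, greedily, by
   pairwise disjoint members of their stars that avoid B, and adding B gives a larger partial
   parallel class. Hence B lies in the family of a small block (at most 13 each) or contains a
   pair of points of U - S that meets a small block without lying inside a block of P; distinct
   blocks contain distinct such pairs, and these pairs are counted exactly. *)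

section \<open>Counting lemmas for families of finite sets\<close>

lemma card_le_card_disjoint_witnesses:
  assumes "finite Z"
    and witness: "\<And>a. a \<in> A \<Longrightarrow> T a \<inter> Z \<noteq> {}"
    and disjoint: "\<And>a b. a \<in> A \<Longrightarrow> b \<in> A \<Longrightarrow> a \<noteq> b \<Longrightarrow> T a \<inter> T b \<inter> Z = {}"
  shows "card A \<le> card Z"
proof -
  define w where "w a = (SOME z. z \<in> T a \<inter> Z)" for a
  have w: "w a \<in> T a \<inter> Z" if "a \<in> A" for a
    unfolding w_def by (rule someI_ex) (use witness[OF that] in blast)
  have "inj_on w A"
  proof (rule inj_onI)
    fix a b assume "a \<in> A" "b \<in> A" "w a = w b"
    then have "w a \<in> T a \<inter> T b \<inter> Z"
      using w by (metis Int_iff)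
    then show "a = b"
      using disjoint \<open>a \<in> A\<close> \<open>b \<in> A\<close> by blast
  qed
  moreover have "w ` A \<subseteq> Z"
    using w by blast
  ultimately show ?thesis
    using \<open>finite Z\<close> by (rule card_inj_on_le)
qed

lemma card_Int_le_1_eq:
  assumes "card (B \<inter> C) \<le> 1" "finite B" "p \<in> B" "p \<in> C"
  shows "B \<inter> C = {p}"
proof -
  have "\<forall>x\<in>B \<inter> C. \<forall>y\<in>B \<inter> C. x = y"
    using assms(1,2) card_le_Suc0_iff_eq[of "B \<inter> C"] by auto
  then show ?thesis
    using assms(3,4) by blast
qed

lemma card_members_through_point_le:
  assumes "C \<in> \<H>" "p \<notin> C"
    and finite: "\<And>B. B \<in> \<H> \<Longrightarrow> finite B"
    and intersecting: "\<And>B C. B \<in> \<H> \<Longrightarrow> C \<in> \<H> \<Longrightarrow> B \<inter> C \<noteq> {}"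
    and linear: "\<And>B C. B \<in> \<H> \<Longrightarrow> C \<in> \<H> \<Longrightarrow> B \<noteq> C \<Longrightarrow> card (B \<inter> C) \<le> 1"
  shows "card {D\<in>\<H>. p \<in> D} \<le> card C"
proof (rule card_le_card_disjoint_witnesses[where T = id])
  show "id D \<inter> C \<noteq> {}" if "D \<in> {D\<in>\<H>. p \<in> D}" for D
    using intersecting assms(1) that by auto
  show "id D \<inter> id D' \<inter> C = {}" if "D \<in> {D\<in>\<H>. p \<in> D}" "D' \<in> {D\<in>\<H>. p \<in> D}" "D \<noteq> D'" for D D'
    using card_Int_le_1_eq[of D D' p] linear[of D D'] finite[of D] assms(2) that by auto
qed (use finite assms(1) in simp)

lemma card_intersecting_family_le:
  assumes "finite \<H>" "B \<in> \<H>" "finite B"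
    and intersecting: "\<And>C. C \<in> \<H> \<Longrightarrow> B \<inter> C \<noteq> {}"
  shows "card \<H> \<le> Suc (\<Sum>p\<in>B. card {D\<in>\<H>. p \<in> D} - 1)"
proof -
  define N where "N = (\<Union>p\<in>B. {D\<in>\<H>. p \<in> D} - {B})"
  have "N \<subseteq> \<H>"
    unfolding N_def by blast
  then have "finite N"
    using \<open>finite \<H>\<close> by (rule finite_subset)
  have "\<H> \<subseteq> insert B N"
    unfolding N_def using intersecting by blast
  then have "card \<H> \<le> card (insert B N)"
    using \<open>finite N\<close> by (intro card_mono) auto
  also have "\<dots> \<le> Suc (card N)"
    using \<open>finite N\<close> by (simp add: card_insert_if)
  also have "card N \<le> (\<Sum>p\<in>B. card ({D\<in>\<H>. p \<in> D} - {B}))"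
    unfolding N_def using \<open>finite B\<close> by (rule card_UN_le)
  also have "\<dots> = (\<Sum>p\<in>B. card {D\<in>\<H>. p \<in> D} - 1)"
    using \<open>B \<in> \<H>\<close> \<open>finite \<H>\<close> by (intro sum.cong) (simp_all add: card_Diff_singleton)
  finally show ?thesis
    by simp
qed

lemma intersecting_linear_family_star_or_card_le:
  assumes "finite \<H>"
    and size: "\<And>B. B \<in> \<H> \<Longrightarrow> finite B \<and> card B = k"
    and intersecting: "\<And>B C. B \<in> \<H> \<Longrightarrow> C \<in> \<H> \<Longrightarrow> B \<inter> C \<noteq> {}"
    and linear: "\<And>B C. B \<in> \<H> \<Longrightarrow> C \<in> \<H> \<Longrightarrow> B \<noteq> C \<Longrightarrow> card (B \<inter> C) \<le> 1"
  shows "(\<exists>c. \<forall>B\<in>\<H>. c \<in> B) \<or> card \<H> \<le> k * (k - 1) + 1"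
proof (cases "\<exists>c. \<forall>B\<in>\<H>. c \<in> B")
  case no_centre: False
  have degree: "card {D\<in>\<H>. p \<in> D} \<le> k" for p
  proof -
    obtain C where "C \<in> \<H>" "p \<notin> C"
      using no_centre by blast
    moreover have "card {D\<in>\<H>. p \<in> D} \<le> card C"
      using \<open>C \<in> \<H>\<close> \<open>p \<notin> C\<close>
    proof (rule card_members_through_point_le)
      show "finite B" if "B \<in> \<H>" for B
        using size that by blast
    qed (use intersecting linear in blast)+
    ultimately show ?thesis
      using size by simp
  qed
  show ?thesis
  proof (cases "\<H> = {}")
    case False
    then obtain B where "B \<in> \<H>"
      by blast
    then have "card \<H> \<le> Suc (\<Sum>p\<in>B. card {D\<in>\<H>. p \<in> D} - 1)"
      using \<open>finite \<H>\<close> size intersecting by (intro card_intersecting_family_le) auto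
    also have "\<dots> \<le> Suc (\<Sum>p\<in>B. k - 1)"
      by (simp only: Suc_le_mono) (intro sum_mono diff_le_mono degree)
    finally show ?thesis
      using size \<open>B \<in> \<H>\<close> by (simp add: mult.commute)
  qed simp
qed simp

lemma card_Un_UN_le:
  assumes "finite I" "\<And>k. k \<in> I \<Longrightarrow> card (A k) \<le> c"
  shows "card (Z \<union> (\<Union>k\<in>I. A k)) \<le> card Z + c * card I"
proof -
  have "card (Z \<union> (\<Union>k\<in>I. A k)) \<le> card Z + card (\<Union>k\<in>I. A k)"
    by (rule card_Un_le)
  also have "\<dots> \<le> card Z + (\<Sum>k\<in>I. card (A k))"
    using card_UN_le[OF assms(1)] by (rule add_left_mono)
  also have "\<dots> \<le> card Z + c * card I"
    using sum_mono[of I "\<lambda>k. card (A k)" "\<lambda>_. c"] assms(2) by (simp add: mult.commute)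
  finally show ?thesis .
qed

lemma ex_member_disjoint:
  assumes "finite Z" "Z \<subseteq> Y" "card Z < card F"
    and disjoint: "\<And>D D'. D \<in> F \<Longrightarrow> D' \<in> F \<Longrightarrow> D \<noteq> D' \<Longrightarrow> D \<inter> D' \<inter> Y = {}"
  shows "\<exists>D\<in>F. D \<inter> Z = {}"
proof (rule ccontr)
  assume none: "\<not> (\<exists>D\<in>F. D \<inter> Z = {})"
  have "card F \<le> card Z"
  proof (rule card_le_card_disjoint_witnesses[where T = id])
    show "id D \<inter> Z \<noteq> {}" if "D \<in> F" for D
      using none that by auto
    show "id D \<inter> id D' \<inter> Z = {}" if "D \<in> F" "D' \<in> F" "D \<noteq> D'" for D D'
      using disjoint[OF that] \<open>Z \<subseteq> Y\<close> by auto
  qed fact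
  then show False
    using \<open>card Z < card F\<close> by simp
qed

lemma greedy_disjoint_choice:
  fixes F :: "'i \<Rightarrow> 'a set set"
  assumes "finite J" "finite Z" "Z \<subseteq> Y"
    and disjoint: "\<And>j D D'. j \<in> J \<Longrightarrow> D \<in> F j \<Longrightarrow> D' \<in> F j \<Longrightarrow> D \<noteq> D' \<Longrightarrow> D \<inter> D' \<inter> Y = {}"
    and bounded: "\<And>j D. j \<in> J \<Longrightarrow> D \<in> F j \<Longrightarrow> finite (D \<inter> Y) \<and> card (D \<inter> Y) \<le> c"
    and many: "\<And>j. j \<in> J \<Longrightarrow> card Z + c * card J < card (F j) + c"
  shows "\<exists>E. \<forall>j\<in>J. E j \<in> F j \<and> E j \<inter> Z = {} \<and> (\<forall>k\<in>J. k \<noteq> j \<longrightarrow> E j \<inter> E k \<inter> Y = {})"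
proof -
  have "\<exists>E. \<forall>j\<in>I. E j \<in> F j \<and> E j \<inter> Z = {} \<and> (\<forall>k\<in>I. k \<noteq> j \<longrightarrow> E j \<inter> E k \<inter> Y = {})"
    if "I \<subseteq> J" for I
    using finite_subset[OF that \<open>finite J\<close>] that
  proof (induction I rule: finite_induct)
    case (insert j I)
    have "I \<subseteq> J"
      using insert.prems by simp
    then obtain E where E: "\<forall>k\<in>I. E k \<in> F k \<and> E k \<inter> Z = {} \<and> (\<forall>l\<in>I. l \<noteq> k \<longrightarrow> E k \<inter> E l \<inter> Y = {})"
      using insert.IH by blast
    have E_bounded: "finite (E k \<inter> Y)" "card (E k \<inter> Y) \<le> c" if "k \<in> I" for k
      using bounded[of k "E k"] E that insert.prems by auto
    define Z' where "Z' = Z \<union> (\<Union>k\<in>I. E k \<inter> Y)"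
    have "\<exists>D\<in>F j. D \<inter> Z' = {}"
    proof (rule ex_member_disjoint)
      show "finite Z'"
        unfolding Z'_def by (rule finite_UnI[OF \<open>finite Z\<close> finite_UN_I[OF insert.hyps(1) E_bounded(1)]])
      show "Z' \<subseteq> Y"
        unfolding Z'_def using \<open>Z \<subseteq> Y\<close> by blast
      have "card Z' \<le> card Z + c * card I"
        unfolding Z'_def using insert.hyps(1) E_bounded(2) by (rule card_Un_UN_le)
      also have "\<dots> < card (F j)"
      proof -
        have "c * Suc (card I) \<le> c * card J"
          using card_mono[OF \<open>finite J\<close> insert.prems] insert.hyps by (intro mult_le_mono2) simp
        then show ?thesis
          using many[of j] insert.prems by simp
      qed
      finally show "card Z' < card (F j)" .
      show "D \<inter> D' \<inter> Y = {}" if "D \<in> F j" "D' \<in> F j" "D \<noteq> D'" for D D'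
        using disjoint[of j D D'] insert.prems that by simp
    qed
    then obtain D where D: "D \<in> F j" "D \<inter> Z' = {}"
      by blast
    have "D \<inter> E k \<inter> Y = {}" "E k \<inter> D \<inter> Y = {}" if "k \<in> I" for k
      using D(2) that unfolding Z'_def by blast+
    moreover have "D \<inter> Z = {}"
      using D(2) unfolding Z'_def by blast
    ultimately show ?case
      using D(1) E insert.hyps(2) by (intro exI[of _ "E(j := D)"]) auto
  qed simp
  then show ?thesis
    by blast
qed

lemma card_pairs_meeting:
  assumes "finite V" "W \<subseteq> V"
  shows "card {e. e \<subseteq> V \<and> card e = 2 \<and> e \<inter> W \<noteq> {}} + (card (V - W) choose 2) = card V choose 2"
proof -
  have "{e. e \<subseteq> V \<and> card e = 2} = {e. e \<subseteq> V \<and> card e = 2 \<and> e \<inter> W \<noteq> {}} \<union> {e. e \<subseteq> V - W \<and> card e = 2}"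
    by blast
  moreover have "card ({e. e \<subseteq> V \<and> card e = 2 \<and> e \<inter> W \<noteq> {}} \<union> {e. e \<subseteq> V - W \<and> card e = 2})
      = card {e. e \<subseteq> V \<and> card e = 2 \<and> e \<inter> W \<noteq> {}} + card {e. e \<subseteq> V - W \<and> card e = 2}"
    using \<open>finite V\<close> by (intro card_Un_disjoint) auto
  ultimately have "card {e. e \<subseteq> V \<and> card e = 2}
      = card {e. e \<subseteq> V \<and> card e = 2 \<and> e \<inter> W \<noteq> {}} + card {e. e \<subseteq> V - W \<and> card e = 2}"
    by simp
  then show ?thesis
    using \<open>finite V\<close> by (simp add: n_subsets)
qed

lemma card_pairs_within_disjoint_family:
  assumes "finite \<F>" "pairwise disjnt \<F>" "\<And>j. j \<in> \<F> \<Longrightarrow> finite j \<and> card j = k"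
  shows "card (\<Union>j\<in>\<F>. {e. e \<subseteq> j \<and> card e = 2}) = card \<F> * (k choose 2)"
proof -
  have "card (\<Union>j\<in>\<F>. {e. e \<subseteq> j \<and> card e = 2}) = (\<Sum>j\<in>\<F>. card {e. e \<subseteq> j \<and> card e = 2})"
  proof (rule card_UN_disjoint)
    show "\<forall>j\<in>\<F>. finite {e. e \<subseteq> j \<and> card e = 2}"
      using assms(3) by simp
    show "\<forall>i\<in>\<F>. \<forall>j\<in>\<F>. i \<noteq> j \<longrightarrow> {e. e \<subseteq> i \<and> card e = 2} \<inter> {e. e \<subseteq> j \<and> card e = 2} = {}"
    proof (intro ballI impI)
      fix i j assume "i \<in> \<F>" "j \<in> \<F>" "i \<noteq> j"
      then have "i \<inter> j = {}"
        using assms(2) unfolding pairwise_def disjnt_def by blast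
      moreover have "e \<noteq> {}" if "card e = 2" for e :: "'a set"
        using that by auto
      ultimately show "{e. e \<subseteq> i \<and> card e = 2} \<inter> {e. e \<subseteq> j \<and> card e = 2} = {}"
        by blast
    qed
  qed fact
  also have "\<dots> = (\<Sum>j\<in>\<F>. k choose 2)"
    using assms(3) by (simp add: n_subsets)
  finally show ?thesis
    by simp
qed

lemma int_choose_two: "2 * int (n choose 2) = int n * (int n - 1)"
proof -
  have "even (n * (n - 1))"
    by (auto simp: even_mult_iff)
  then have "int (2 * (n choose 2)) = int (n * (n - 1))"
    unfolding choose_two by simp
  then show ?thesis
    by (cases n) (simp_all add: algebra_simps)
qed

section \<open>Packings and partial parallel classes\<close>

lemma packing_block:
  assumes "packing v k X \<B>" "B \<in> \<B>"
  shows "B \<subseteq> X" "finite B" "card B = k"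
proof -
  show "B \<subseteq> X" "card B = k"
    using assms unfolding packing_def by auto
  then show "finite B"
    using assms(1) finite_subset unfolding packing_def by auto
qed

lemma packing_finite:
  assumes "packing v k X \<B>"
  shows "finite \<B>"
proof -
  have "\<B> \<subseteq> Pow X"
    using packing_block(1)[OF assms] by blast
  moreover have "finite X"
    using assms unfolding packing_def by simp
  ultimately show ?thesis
    by (simp add: finite_subset)
qed

lemma packing_block_eqI:
  assumes pk: "packing v k X \<B>" and "B \<in> \<B>" "C \<in> \<B>"
    and "x \<in> B" "x \<in> C" "y \<in> B" "y \<in> C" "x \<noteq> y"
  shows "B = C"
proof -
  have "x \<in> X" "y \<in> X"
    using packing_block(1)[OF pk \<open>B \<in> \<B>\<close>] assms by auto
  then have "card {D\<in>\<B>. x \<in> D \<and> y \<in> D} \<le> Suc 0"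
    using pk \<open>x \<noteq> y\<close> unfolding packing_def by auto
  moreover have "finite {D\<in>\<B>. x \<in> D \<and> y \<in> D}"
    using packing_finite[OF pk] by simp
  ultimately have "\<forall>D\<in>{D\<in>\<B>. x \<in> D \<and> y \<in> D}. \<forall>D'\<in>{D\<in>\<B>. x \<in> D \<and> y \<in> D}. D = D'"
    by (simp only: card_le_Suc0_iff_eq)
  then show ?thesis
    using assms(2-7) by auto
qed

lemma packing_card_Int_le_1:
  assumes pk: "packing v k X \<B>" and "B \<in> \<B>" "C \<in> \<B>" "B \<noteq> C"
  shows "card (B \<inter> C) \<le> 1"
proof -
  have "\<forall>x\<in>B \<inter> C. \<forall>y\<in>B \<inter> C. x = y"
    using packing_block_eqI[OF pk] assms by blast
  then show ?thesis
    using packing_block(2)[OF pk \<open>B \<in> \<B>\<close>] card_le_Suc0_iff_eq[of "B \<inter> C"] by auto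
qed

lemma packing_card_blocks_through_point:
  assumes pk: "packing v k X \<B>" and "x \<in> S"
  shows "int (card (\<Union>B\<in>{B\<in>\<B>. x \<in> B}. B - {x})) = (int k - 1) * int (card {B\<in>\<B>. x \<in> B})"
    and "int (card ((\<Union>B\<in>{B\<in>\<B>. x \<in> B}. B - {x}) \<inter> S))
           = (\<Sum>B\<in>{B\<in>\<B>. x \<in> B}. int (card (B \<inter> S)) - 1)"
proof -
  define R where "R = {B\<in>\<B>. x \<in> B}"
  have "finite R"
    unfolding R_def using packing_finite[OF pk] by simp
  have R: "finite B" "card B = k" "x \<in> B" if "B \<in> R" for B
    using packing_block[OF pk] that unfolding R_def by auto
  have disjoint: "\<forall>B\<in>R. \<forall>C\<in>R. B \<noteq> C \<longrightarrow> (B - {x}) \<inter> (C - {x}) = {}"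
    unfolding R_def using packing_block_eqI[OF pk] by blast
  have "card (\<Union>B\<in>R. B - {x}) = (\<Sum>B\<in>R. card (B - {x}))"
    using \<open>finite R\<close> R disjoint by (intro card_UN_disjoint) auto
  also have "\<dots> = (\<Sum>B\<in>R. k - 1)"
    using R by (intro sum.cong) auto
  finally show "int (card (\<Union>B\<in>{B\<in>\<B>. x \<in> B}. B - {x})) = (int k - 1) * int (card {B\<in>\<B>. x \<in> B})"
    unfolding R_def[symmetric] using pk unfolding packing_def by (simp add: of_nat_diff)
  have "(\<Union>B\<in>R. B - {x}) \<inter> S = (\<Union>B\<in>R. (B \<inter> S) - {x})"
    by blast
  also have "card \<dots> = (\<Sum>B\<in>R. card ((B \<inter> S) - {x}))"
    using \<open>finite R\<close> R disjoint by (intro card_UN_disjoint) blast+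
  also have "\<dots> = (\<Sum>B\<in>R. card (B \<inter> S) - 1)"
    using R \<open>x \<in> S\<close> by (intro sum.cong) auto
  finally have "card ((\<Union>B\<in>R. B - {x}) \<inter> S) = (\<Sum>B\<in>R. card (B \<inter> S) - 1)" .
  moreover have "card (B \<inter> S) \<noteq> 0" if "B \<in> R" for B
    using R[OF that] \<open>x \<in> S\<close> by auto
  ultimately show "int (card ((\<Union>B\<in>{B\<in>\<B>. x \<in> B}. B - {x}) \<inter> S))
      = (\<Sum>B\<in>{B\<in>\<B>. x \<in> B}. int (card (B \<inter> S)) - 1)"
    unfolding R_def[symmetric] by (simp add: of_nat_sum of_nat_diff Suc_le_eq cong: sum.cong)
qed

lemma packing_sum_blocks_through_point:
  assumes pk: "packing v k X \<B>" and "S \<subseteq> X" "x \<in> S"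
  shows "(\<Sum>B\<in>{B\<in>\<B>. x \<in> B}. 2 * int k - 1 - int (card (B \<inter> S)))
           \<le> 2 * int v - 1 - int (card S)"
proof -
  define R where "R = {B\<in>\<B>. x \<in> B}"
  define T where "T = (\<Union>B\<in>R. B - {x})"
  have "finite X" "card X = v"
    using pk unfolding packing_def by auto
  have "T \<subseteq> X"
    unfolding T_def R_def using packing_block(1)[OF pk] by blast
  then have "finite T" "finite S"
    using \<open>finite X\<close> \<open>S \<subseteq> X\<close> finite_subset by blast+
  have "card (T \<union> S) \<le> v"
    using \<open>T \<subseteq> X\<close> \<open>S \<subseteq> X\<close> \<open>finite X\<close> \<open>card X = v\<close> by (metis card_mono Un_subset_iff)
  moreover have "card (T \<union> S) + card (T \<inter> S) = card T + card S"
    using \<open>finite T\<close> \<open>finite S\<close> by (rule card_Un_Int[symmetric])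
  moreover have "T \<inter> S \<subseteq> S - {x}"
    unfolding T_def by blast
  then have "card (T \<inter> S) \<le> card (S - {x})"
    using \<open>finite S\<close> by (intro card_mono) auto
  then have "card (T \<inter> S) + 1 \<le> card S"
    using \<open>finite S\<close> \<open>x \<in> S\<close> card_gt_0_iff[of S] by (auto simp: card_Diff_singleton)
  moreover have "(\<Sum>B\<in>R. 2 * int k - 1 - int (card (B \<inter> S)))
      = (\<Sum>B\<in>R. 2 * (int k - 1) - (int (card (B \<inter> S)) - 1))"
    by (simp add: algebra_simps)
  moreover have "\<dots> = 2 * (int k - 1) * int (card R) - (\<Sum>B\<in>R. int (card (B \<inter> S)) - 1)"
    by (simp only: sum_subtractf sum_constant) simp
  ultimately show ?thesis
    using packing_card_blocks_through_point[OF pk \<open>x \<in> S\<close>] unfolding R_def[symmetric] T_def[symmetric]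
    by linarith
qed

lemma packing_card_blocks_meeting:
  assumes pk: "packing v k X \<B>" and "S \<subseteq> X"
  shows "(2 * int k - 2) * int (card {B\<in>\<B>. B \<inter> S \<noteq> {}})
           \<le> int (card S) * (2 * int v - 1 - int (card S))"
proof -
  define g where "g B = 2 * int k - 1 - int (card (B \<inter> S))" for B
  have "finite S"
    using pk \<open>S \<subseteq> X\<close> finite_subset unfolding packing_def by blast
  have "finite \<B>"
    using packing_finite[OF pk] .
  have "(2 * int k - 2) * int (card {B\<in>\<B>. B \<inter> S \<noteq> {}}) = (\<Sum>B\<in>{B\<in>\<B>. B \<inter> S \<noteq> {}}. 2 * int k - 2)"
    by simp
  also have "\<dots> \<le> (\<Sum>B\<in>{B\<in>\<B>. B \<inter> S \<noteq> {}}. int (card (B \<inter> S)) * g B)"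
  proof (rule sum_mono)
    fix B assume "B \<in> {B\<in>\<B>. B \<inter> S \<noteq> {}}"
    then have "1 \<le> card (B \<inter> S)" "card (B \<inter> S) \<le> k" "2 \<le> k"
      using packing_block[OF pk] pk \<open>finite S\<close> card_mono[of B "B \<inter> S"]
      by (auto simp: Suc_le_eq card_gt_0_iff packing_def)
    then have "0 \<le> (int (card (B \<inter> S)) - 1) * (2 * int k - 2 - int (card (B \<inter> S)))"
      by (intro mult_nonneg_nonneg) auto
    then show "2 * int k - 2 \<le> int (card (B \<inter> S)) * g B"
      unfolding g_def by (simp add: algebra_simps)
  qed
  also have "\<dots> = (\<Sum>B\<in>\<B>. int (card (B \<inter> S)) * g B)"
    using \<open>finite \<B>\<close> by (intro sum.mono_neutral_left) auto
  also have "\<dots> = (\<Sum>B\<in>\<B>. \<Sum>x\<in>{x\<in>S. x \<in> B}. g B)"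
    by (intro sum.cong) (auto simp: Int_def conj_commute)
  also have "\<dots> = (\<Sum>x\<in>S. \<Sum>B\<in>{B\<in>\<B>. x \<in> B}. g B)"
    using \<open>finite S\<close> \<open>finite \<B>\<close> by (rule sum.swap_restrict[symmetric])
  also have "\<dots> \<le> (\<Sum>x\<in>S. 2 * int v - 1 - int (card S))"
    unfolding g_def using packing_sum_blocks_through_point[OF pk \<open>S \<subseteq> X\<close>] by (rule sum_mono)
  finally show ?thesis
    by simp
qed

lemma max_ppc_size_card_le:
  assumes "max_ppc_size \<B> \<rho>" "ppc \<B> Q" "finite Q"
  shows "card Q \<le> \<rho>"
proof (rule ccontr)
  assume "\<not> card Q \<le> \<rho>"
  then obtain Q' where "Q' \<subseteq> Q" "card Q' = \<rho> + 1"
    using obtain_subset_with_card_n[of "\<rho> + 1" Q] by auto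
  moreover have "ppc \<B> Q'" "finite Q'"
    using assms(2,3) \<open>Q' \<subseteq> Q\<close> finite_subset unfolding ppc_def by blast+
  ultimately show False
    using assms(1) unfolding max_ppc_size_def by blast
qed

lemma ppc_insert_image:
  assumes "B \<in> \<B>" "B \<noteq> {}"
    and E: "\<And>j. j \<in> J \<Longrightarrow> E j \<in> \<B> \<and> E j \<noteq> {} \<and> E j \<inter> B = {}"
    and disjoint: "\<And>j k. j \<in> J \<Longrightarrow> k \<in> J \<Longrightarrow> j \<noteq> k \<Longrightarrow> E j \<inter> E k = {}"
  shows "ppc \<B> (insert B (E ` J))" "finite J \<Longrightarrow> card (insert B (E ` J)) = Suc (card J)"
proof -
  show "ppc \<B> (insert B (E ` J))"
    unfolding ppc_def
  proof (intro conjI ballI impI)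
    show "insert B (E ` J) \<subseteq> \<B>"
      using assms(1) E by blast
    fix D D' assume "D \<in> insert B (E ` J)" "D' \<in> insert B (E ` J)" "D \<noteq> D'"
    then consider "D = B" "D' \<in> E ` J" | "D \<in> E ` J" "D' = B" | "D \<in> E ` J" "D' \<in> E ` J"
      by blast
    then show "D \<inter> D' = {}"
    proof cases
      case 1
      then show ?thesis
        using E by (auto simp: Int_commute)
    next
      case 2
      then show ?thesis
        using E by auto
    next
      case 3
      then show ?thesis
        using disjoint \<open>D \<noteq> D'\<close> by auto
    qed
  qed
  assume "finite J"
  have "inj_on E J"
  proof (rule inj_onI)
    fix j k assume "j \<in> J" "k \<in> J" "E j = E k"
    then show "j = k"
      using disjoint[of j k] E[of j] by auto
  qed
  moreover have "B \<notin> E ` J"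
    using assms(2) E by auto
  ultimately show "card (insert B (E ` J)) = Suc (card J)"
    using \<open>finite J\<close> by (simp add: card_image)
qed

section \<open>Packings with a maximum partial parallel class\<close>

locale max_ppc_packing =
  fixes X :: "'a set" and \<B> :: "'a set set" and v \<rho> :: nat and P :: "'a set set"
  assumes packing: "packing v 4 X \<B>"
    and maximum: "max_ppc_size \<B> \<rho>"
    and ppc_P: "ppc \<B> P" and finite_P: "finite P" and card_P: "card P = \<rho>"
begin

definition covered :: "'a set" where
  "covered = \<Union>P"

definition confined :: "'a set \<Rightarrow> 'a set set" where
  "confined j = {B\<in>\<B>. B \<inter> covered \<subseteq> j}"

(* 14 is one more than the bound 4 * (4 - 1) + 1 of intersecting_linear_family_star_or_card_le. *)
definition large :: "'a set \<Rightarrow> bool" where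
  "large j \<longleftrightarrow> (\<exists>c\<in>j. \<forall>B\<in>confined j. c \<in> B) \<and> 14 \<le> card (confined j)"

definition centre :: "'a set \<Rightarrow> 'a" where
  "centre j = (SOME c. c \<in> j \<and> (\<forall>B\<in>confined j. c \<in> B))"

definition large_blocks :: "'a set set" where
  "large_blocks = {j\<in>P. large j}"

definition small_blocks :: "'a set set" where
  "small_blocks = {j\<in>P. \<not> large j}"

definition centres :: "'a set" where
  "centres = centre ` large_blocks"

definition cross_pairs :: "'a set set" where
  "cross_pairs = {e. e \<subseteq> covered - centres \<and> card e = 2 \<and> e \<inter> \<Union>small_blocks \<noteq> {}
                      \<and> (\<forall>j\<in>P. \<not> e \<subseteq> j)}"

lemma block: "B \<in> \<B> \<Longrightarrow> B \<subseteq> X \<and> finite B \<and> card B = 4"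
  using packing_block[OF packing] by blast

lemma block_nonempty: "B \<in> \<B> \<Longrightarrow> B \<noteq> {}"
  using block by fastforce

lemma finite_blocks: "finite \<B>"
  using packing_finite[OF packing] .

lemma P_blocks: "P \<subseteq> \<B>"
  using ppc_P unfolding ppc_def by blast

lemma P_disjoint: "i \<in> P \<Longrightarrow> j \<in> P \<Longrightarrow> i \<noteq> j \<Longrightarrow> i \<inter> j = {}"
  using ppc_P unfolding ppc_def by blast

lemma finite_covered: "finite covered"
  unfolding covered_def using finite_P P_blocks block by blast

lemma card_Union_P_subset:
  assumes "Q \<subseteq> P"
  shows "card (\<Union>Q) = 4 * card Q"
proof -
  have "pairwise disjnt Q"
    using assms P_disjoint unfolding pairwise_def disjnt_def by blast
  then have "card (\<Union>Q) = sum card Q"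
    using assms P_blocks block by (intro card_Union_disjoint) blast+
  also have "\<dots> = (\<Sum>j\<in>Q. 4)"
    using assms P_blocks block by (intro sum.cong) auto
  also have "\<dots> = 4 * card Q"
    by simp
  finally show ?thesis .
qed

lemma card_replacement_le:
  assumes "J \<subseteq> P" "ppc \<B> N" "finite N" "\<And>B C. B \<in> N \<Longrightarrow> C \<in> P - J \<Longrightarrow> B \<inter> C = {}"
  shows "card N \<le> card J"
proof -
  have "ppc \<B> ((P - J) \<union> N)"
    unfolding ppc_def
  proof (intro conjI ballI impI)
    show "(P - J) \<union> N \<subseteq> \<B>"
      using P_blocks assms(2) unfolding ppc_def by blast
    fix B C assume "B \<in> (P - J) \<union> N" "C \<in> (P - J) \<union> N" "B \<noteq> C"
    then consider "B \<in> P" "C \<in> P" | "B \<in> N" "C \<in> N" | "B \<in> N" "C \<in> P - J" | "B \<in> P - J" "C \<in> N"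
      by blast
    then show "B \<inter> C = {}"
    proof cases
      case 4
      then show ?thesis
        using assms(4)[of C B] by blast
    qed (use P_disjoint assms(2,4) \<open>B \<noteq> C\<close> in \<open>auto simp: ppc_def\<close>)
  qed
  then have "card ((P - J) \<union> N) \<le> \<rho>"
    using max_ppc_size_card_le[OF maximum] assms(3) finite_P by blast
  moreover have "B \<notin> N" if "B \<in> P - J" for B
    using assms(4)[of B B] that block_nonempty P_blocks by blast
  then have "card ((P - J) \<union> N) = card (P - J) + card N"
    using assms(3) finite_P by (intro card_Un_disjoint) auto
  moreover have "card (P - J) = \<rho> - card J"
    using assms(1) finite_P card_P by (simp add: card_Diff_subset finite_subset)
  moreover have "card J \<le> \<rho>"
    using assms(1) finite_P card_P by (metis card_mono)
  ultimately show ?thesis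
    by linarith
qed

lemma block_meets_covered:
  assumes "B \<in> \<B>"
  shows "B \<inter> covered \<noteq> {}"
proof
  assume "B \<inter> covered = {}"
  have "card {B} \<le> card ({} :: 'a set set)"
  proof (rule card_replacement_le)
    show "ppc \<B> {B}"
      using assms unfolding ppc_def by blast
    show "D \<inter> C = {}" if "D \<in> {B}" "C \<in> P - {}" for D C
      using that \<open>B \<inter> covered = {}\<close> unfolding covered_def by blast
  qed simp_all
  then show False
    by simp
qed

lemma confined_intersecting:
  assumes "j \<in> P" "B \<in> confined j" "C \<in> confined j"
  shows "B \<inter> C \<noteq> {}"
proof
  assume "B \<inter> C = {}"
  then have "B \<noteq> C"
    using assms(2) block_nonempty unfolding confined_def by blast
  have "card {B, C} \<le> card {j}"
  proof (rule card_replacement_le)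
    show "ppc \<B> {B, C}"
      using assms(2,3) \<open>B \<inter> C = {}\<close> unfolding ppc_def confined_def by auto
    show "D \<inter> i = {}" if "D \<in> {B, C}" "i \<in> P - {j}" for D i
      using that assms P_disjoint[of i j] unfolding confined_def covered_def by blast
  qed (use assms(1) in auto)
  then show False
    using \<open>B \<noteq> C\<close> by simp
qed

lemma card_confined_le_13:
  assumes "j \<in> P" "\<not> large j"
  shows "card (confined j) \<le> 13"
proof -
  have "finite (confined j)"
    using finite_blocks unfolding confined_def by simp
  then have "(\<exists>c. \<forall>B\<in>confined j. c \<in> B) \<or> card (confined j) \<le> 4 * (4 - 1) + 1"
  proof (rule intersecting_linear_family_star_or_card_le)
    show "finite B \<and> card B = 4" if "B \<in> confined j" for B
      using that block unfolding confined_def by blast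
    show "B \<inter> C \<noteq> {}" if "B \<in> confined j" "C \<in> confined j" for B C
      using confined_intersecting[OF assms(1) that] .
    show "card (B \<inter> C) \<le> 1" if "B \<in> confined j" "C \<in> confined j" "B \<noteq> C" for B C
      using packing_card_Int_le_1[OF packing] that unfolding confined_def by blast
  qed
  moreover have "j \<in> confined j"
    using assms(1) P_blocks unfolding confined_def covered_def by blast
  ultimately show ?thesis
    using assms(2) unfolding large_def by auto
qed

lemma centre_in:
  assumes "large j"
  shows "centre j \<in> j" "B \<in> confined j \<Longrightarrow> centre j \<in> B"
proof -
  have "\<exists>c. c \<in> j \<and> (\<forall>B\<in>confined j. c \<in> B)"
    using assms unfolding large_def by blast
  then have "centre j \<in> j \<and> (\<forall>B\<in>confined j. centre j \<in> B)"
    unfolding centre_def by (rule someI_ex)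
  then show "centre j \<in> j" "B \<in> confined j \<Longrightarrow> centre j \<in> B"
    by blast+
qed

lemma centre_covered: "j \<in> large_blocks \<Longrightarrow> centre j \<in> covered"
  using centre_in(1) unfolding large_blocks_def covered_def by blast

lemma centre_mem_iff:
  assumes "i \<in> large_blocks" "j \<in> P"
  shows "centre i \<in> j \<longleftrightarrow> i = j"
  using assms centre_in(1) P_disjoint unfolding large_blocks_def by blast

lemma confined_Int_covered:
  assumes "j \<in> large_blocks" "D \<in> confined j" "D \<noteq> j"
  shows "D \<inter> covered = {centre j}"
proof -
  have "j \<in> \<B>" "large j"
    using assms(1) P_blocks unfolding large_blocks_def by blast+
  have "p = centre j" if "p \<in> D" "p \<in> covered" for p
  proof (rule ccontr)
    assume "p \<noteq> centre j"
    moreover have "p \<in> j"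
      using that assms(2) unfolding confined_def by blast
    ultimately have "D = j"
      using packing_block_eqI[OF packing, of D j p "centre j"] assms(2) centre_in[OF \<open>large j\<close>]
        \<open>j \<in> \<B>\<close> that(1) unfolding confined_def by blast
    then show False
      using assms(3) by blast
  qed
  then show ?thesis
    using centre_in(2)[OF \<open>large j\<close> assms(2)] centre_covered[OF assms(1)] by blast
qed

lemma confined_Int_outside_covered:
  assumes "j \<in> large_blocks" "D \<in> confined j" "D' \<in> confined j" "D \<noteq> D'"
  shows "D \<inter> D' \<inter> - covered = {}"
proof -
  have "large j"
    using assms(1) unfolding large_blocks_def by blast
  have "centre j \<in> D" "centre j \<in> D'"
    using centre_in(2)[OF \<open>large j\<close>] assms(2,3) by blast+
  then show ?thesis
    using packing_block_eqI[OF packing, of D D' _ "centre j"] assms centre_covered[OF assms(1)]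
    unfolding confined_def by blast
qed

lemma card_block_outside_covered:
  assumes "B \<in> \<B>"
  shows "finite (B \<inter> - covered)" "card (B \<inter> - covered) \<le> 3"
proof -
  obtain p where "p \<in> B" "p \<in> covered"
    using block_meets_covered[OF assms] by blast
  then have "B \<inter> - covered \<subseteq> B - {p}"
    by blast
  moreover have "finite B" "card (B - {p}) = 3"
    using block[OF assms] \<open>p \<in> B\<close> by simp_all
  ultimately show "finite (B \<inter> - covered)" "card (B \<inter> - covered) \<le> 3"
    by (metis finite_Diff finite_subset, metis card_mono finite_Diff)
qed

lemma disjoint_confined_representatives:
  assumes "B \<in> \<B>" "J \<subseteq> large_blocks" "card J \<le> 4"
  shows "\<exists>E. \<forall>j\<in>J. E j \<in> confined j - {j} \<and> E j \<inter> (B \<inter> - covered) = {}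
                  \<and> (\<forall>k\<in>J. k \<noteq> j \<longrightarrow> E j \<inter> E k \<inter> - covered = {})"
proof (rule greedy_disjoint_choice[where F = "\<lambda>j. confined j - {j}" and Y = "- covered" and c = 3])
  show "finite J"
    using assms(2) finite_P by (auto simp: large_blocks_def intro: finite_subset)
  show "finite (B \<inter> - covered)"
    using card_block_outside_covered(1)[OF assms(1)] .
  show "D \<inter> D' \<inter> - covered = {}"
    if "j \<in> J" "D \<in> confined j - {j}" "D' \<in> confined j - {j}" "D \<noteq> D'" for j D D'
    using confined_Int_outside_covered assms(2) that by blast
  show "finite (D \<inter> - covered) \<and> card (D \<inter> - covered) \<le> 3" if "j \<in> J" "D \<in> confined j - {j}" for j D
    using card_block_outside_covered that unfolding confined_def by blast
  show "card (B \<inter> - covered) + 3 * card J < card (confined j - {j}) + 3" if "j \<in> J" for j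
  proof -
    (* at each greedy step at most 3 + 3 * 3 of the at least 13 candidates are excluded *)
    have "j \<in> P" "large j"
      using that assms(2) unfolding large_blocks_def by blast+
    then have "j \<in> confined j" "14 \<le> card (confined j)"
      using P_blocks unfolding confined_def covered_def large_def by blast+
    then have "13 \<le> card (confined j - {j})"
      by (simp add: card_Diff_singleton_if)
    then show ?thesis
      using card_block_outside_covered(2)[OF assms(1)] assms(3) by linarith
  qed
qed auto

lemma centre_in_centres: "j \<in> large_blocks \<Longrightarrow> centre j \<in> centres"
  unfolding centres_def by blast

lemma card_P_blocks_meeting_le:
  assumes "B \<in> \<B>"
  shows "card {j\<in>P. B \<inter> j \<noteq> {}} \<le> 4"
proof -
  have "card {j\<in>P. B \<inter> j \<noteq> {}} \<le> card B"
  proof (rule card_le_card_disjoint_witnesses[where T = id])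
    show "finite B"
      using block[OF assms] by blast
    show "id i \<inter> id j \<inter> B = {}" if "i \<in> {j\<in>P. B \<inter> j \<noteq> {}}" "j \<in> {j\<in>P. B \<inter> j \<noteq> {}}" "i \<noteq> j"
      for i j
      using P_disjoint[of i j] that by auto
  qed auto
  then show ?thesis
    using block[OF assms] by simp
qed

lemma confined_Int_P_block:
  assumes "i \<in> large_blocks" "D \<in> confined i" "D \<noteq> i" "C \<in> P" "C \<noteq> i"
  shows "D \<inter> C = {}"
proof -
  have "centre i \<notin> C"
    using centre_mem_iff[of i C] assms by auto
  moreover have "D \<inter> C \<subseteq> {centre i}"
    using confined_Int_covered[OF assms(1-3)] assms(4) unfolding covered_def by blast
  ultimately show ?thesis
    by blast
qed

lemma confined_disjointI:
  assumes "i \<in> large_blocks" "D \<in> confined i" "D \<noteq> i"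
    and "j \<in> large_blocks" "D' \<in> confined j" "D' \<noteq> j"
    and "i \<noteq> j" "D \<inter> D' \<inter> - covered = {}"
  shows "D \<inter> D' = {}"
proof -
  have "centre i \<notin> j"
    using centre_mem_iff[of i j] assms unfolding large_blocks_def by auto
  moreover have "centre j \<in> j"
    using centre_in(1)[of j] assms(4) unfolding large_blocks_def by blast
  ultimately have "centre i \<noteq> centre j"
    by auto
  have "D \<inter> D' \<inter> covered = (D \<inter> covered) \<inter> (D' \<inter> covered)"
    by blast
  also have "\<dots> = {}"
    using confined_Int_covered assms(1-6) \<open>centre i \<noteq> centre j\<close> by simp
  finally show ?thesis
    using assms(8) by blast
qed

lemma confined_avoids_centre_free_block:
  assumes "i \<in> large_blocks" "D \<in> confined i" "D \<noteq> i"
    and "B \<inter> centres = {}" "D \<inter> (B \<inter> - covered) = {}"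
  shows "D \<inter> B = {}"
proof -
  have "centre i \<notin> B"
    using assms(1,4) centre_in_centres by auto
  then show ?thesis
    using confined_Int_covered[OF assms(1-3)] assms(5) by auto
qed

lemma avoiding_confined_representatives:
  assumes "B \<in> \<B>" "B \<inter> centres = {}" "J \<subseteq> large_blocks" "card J \<le> 4"
  obtains E where "\<And>j. j \<in> J \<Longrightarrow> E j \<in> \<B> \<and> E j \<noteq> {} \<and> E j \<inter> B = {}"
    and "\<And>j k. j \<in> J \<Longrightarrow> k \<in> J \<Longrightarrow> j \<noteq> k \<Longrightarrow> E j \<inter> E k = {}"
    and "\<And>j C. j \<in> J \<Longrightarrow> C \<in> P - J \<Longrightarrow> E j \<inter> C = {}"
proof -
  obtain E where E: "\<forall>j\<in>J. E j \<in> confined j - {j} \<and> E j \<inter> (B \<inter> - covered) = {}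
      \<and> (\<forall>k\<in>J. k \<noteq> j \<longrightarrow> E j \<inter> E k \<inter> - covered = {})"
    using disjoint_confined_representatives[OF assms(1,3,4)] by blast
  show thesis
  proof (rule that[of E])
    fix j assume "j \<in> J"
    then have "j \<in> large_blocks" "E j \<in> confined j" "E j \<noteq> j" "E j \<inter> (B \<inter> - covered) = {}"
      using E assms(3) by auto
    then show "E j \<in> \<B> \<and> E j \<noteq> {} \<and> E j \<inter> B = {}"
      using block_nonempty confined_avoids_centre_free_block[OF _ _ _ assms(2)] unfolding confined_def
      by auto
  next
    fix j k assume "j \<in> J" "k \<in> J" "j \<noteq> k"
    show "E j \<inter> E k = {}"
      by (rule confined_disjointI) (use E assms(3) \<open>j \<in> J\<close> \<open>k \<in> J\<close> \<open>j \<noteq> k\<close> in auto)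
  next
    fix j C assume "j \<in> J" "C \<in> P - J"
    show "E j \<inter> C = {}"
      by (rule confined_Int_P_block) (use E assms(3) \<open>j \<in> J\<close> \<open>C \<in> P - J\<close> in auto)
  qed
qed

lemma block_avoiding_centres_meets_small:
  assumes B: "B \<in> \<B>" and avoids: "B \<inter> centres = {}"
  shows "\<exists>j\<in>small_blocks. B \<inter> j \<noteq> {}"
proof (rule ccontr)
  assume no_small: "\<not> (\<exists>j\<in>small_blocks. B \<inter> j \<noteq> {})"
  define J where "J = {j\<in>P. B \<inter> j \<noteq> {}}"
  have "J \<subseteq> P" "J \<subseteq> large_blocks"
    using no_small unfolding J_def large_blocks_def small_blocks_def by blast+
  have "finite J"
    using \<open>J \<subseteq> P\<close> finite_P by (rule finite_subset)
  have "card J \<le> 4"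
    unfolding J_def using card_P_blocks_meeting_le[OF B] .
  obtain E where E_block: "\<And>j. j \<in> J \<Longrightarrow> E j \<in> \<B> \<and> E j \<noteq> {} \<and> E j \<inter> B = {}"
    and E_disjoint: "\<And>j k. j \<in> J \<Longrightarrow> k \<in> J \<Longrightarrow> j \<noteq> k \<Longrightarrow> E j \<inter> E k = {}"
    and E_avoids_P: "\<And>j C. j \<in> J \<Longrightarrow> C \<in> P - J \<Longrightarrow> E j \<inter> C = {}"
    using avoiding_confined_representatives[OF B avoids \<open>J \<subseteq> large_blocks\<close> \<open>card J \<le> 4\<close>] by blast
  have "card (insert B (E ` J)) \<le> card J"
  proof (rule card_replacement_le)
    show "ppc \<B> (insert B (E ` J))"
      using ppc_insert_image(1)[OF B block_nonempty[OF B] E_block E_disjoint] .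
    show "D \<inter> C = {}" if "D \<in> insert B (E ` J)" "C \<in> P - J" for D C
    proof -
      have "B \<inter> C = {}"
        using that(2) unfolding J_def by blast
      then show ?thesis
        using that E_avoids_P by auto
    qed
  qed (use \<open>J \<subseteq> P\<close> \<open>finite J\<close> in simp_all)
  then show False
    using ppc_insert_image(2)[OF B block_nonempty[OF B] E_block E_disjoint \<open>finite J\<close>] by simp
qed

lemma card_large_small: "card large_blocks + card small_blocks = \<rho>"
proof -
  have "large_blocks \<union> small_blocks = P" "large_blocks \<inter> small_blocks = {}"
    unfolding large_blocks_def small_blocks_def by blast+
  then show ?thesis
    using finite_P card_P card_Un_disjoint[of large_blocks small_blocks]
    by (metis finite_Un)
qed

lemma card_centres: "card centres = card large_blocks"
  unfolding centres_def
proof (rule card_image)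
  show "inj_on centre large_blocks"
    using centre_mem_iff centre_in(1) unfolding large_blocks_def inj_on_def by force
qed

lemma centres_subset_covered: "centres \<subseteq> covered"
  unfolding centres_def using centre_covered by blast

lemma small_points_subset: "\<Union>small_blocks \<subseteq> covered - centres"
  using centre_mem_iff unfolding centres_def small_blocks_def large_blocks_def covered_def by blast

lemma pairs_meeting_small_blocks:
  "{e. e \<subseteq> covered - centres \<and> card e = 2 \<and> e \<inter> \<Union>small_blocks \<noteq> {}}
     = cross_pairs \<union> (\<Union>j\<in>small_blocks. {e. e \<subseteq> j \<and> card e = 2})"
proof (intro equalityI subsetI)
  fix e assume "e \<in> {e. e \<subseteq> covered - centres \<and> card e = 2 \<and> e \<inter> \<Union>small_blocks \<noteq> {}}"
  then have e: "e \<subseteq> covered - centres" "card e = 2" "e \<inter> \<Union>small_blocks \<noteq> {}"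
    by auto
  show "e \<in> cross_pairs \<union> (\<Union>j\<in>small_blocks. {e. e \<subseteq> j \<and> card e = 2})"
  proof (cases "\<exists>j\<in>P. e \<subseteq> j")
    case True
    then obtain j where "j \<in> P" "e \<subseteq> j"
      by blast
    obtain p i where "p \<in> e" "i \<in> small_blocks" "p \<in> i"
      using e(3) by blast
    then have "i = j"
      using P_disjoint[of i j] \<open>j \<in> P\<close> \<open>e \<subseteq> j\<close> unfolding small_blocks_def by blast
    then show ?thesis
      using \<open>e \<subseteq> j\<close> e(2) \<open>i \<in> small_blocks\<close> by blast
  next
    case False
    then show ?thesis
      using e unfolding cross_pairs_def by blast
  qed
next
  fix e assume "e \<in> cross_pairs \<union> (\<Union>j\<in>small_blocks. {e. e \<subseteq> j \<and> card e = 2})"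
  then show "e \<in> {e. e \<subseteq> covered - centres \<and> card e = 2 \<and> e \<inter> \<Union>small_blocks \<noteq> {}}"
  proof
    assume "e \<in> cross_pairs"
    then show ?thesis
      unfolding cross_pairs_def by blast
  next
    assume "e \<in> (\<Union>j\<in>small_blocks. {e. e \<subseteq> j \<and> card e = 2})"
    then obtain j where "j \<in> small_blocks" "e \<subseteq> j" "card e = 2"
      by blast
    moreover have "e \<noteq> {}"
      using \<open>card e = 2\<close> by auto
    ultimately show ?thesis
      using small_points_subset by blast
  qed
qed

lemma card_cross_pairs:
  "card cross_pairs + 6 * card small_blocks + (3 * card large_blocks choose 2)
     = (3 * card large_blocks + 4 * card small_blocks) choose 2"
proof -
  define V where "V = covered - centres"
  define W where "W = \<Union>small_blocks"
  define inside where "inside = (\<Union>j\<in>small_blocks. {e. e \<subseteq> j \<and> card e = 2})"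
  have "card covered = 4 * \<rho>"
    unfolding covered_def using card_Union_P_subset[of P] card_P by simp
  then have card_V: "card V = 3 * card large_blocks + 4 * card small_blocks"
    unfolding V_def using card_Diff_subset[OF finite_subset[OF centres_subset_covered]]
      finite_covered centres_subset_covered card_centres card_large_small by simp
  have "W \<subseteq> V"
    unfolding W_def V_def using small_points_subset .
  have "card W = 4 * card small_blocks"
    unfolding W_def small_blocks_def by (rule card_Union_P_subset) blast
  then have card_VW: "card (V - W) = 3 * card large_blocks"
    using card_V card_Diff_subset[OF finite_subset[OF \<open>W \<subseteq> V\<close>] \<open>W \<subseteq> V\<close>] finite_covered
    unfolding V_def by simp
  have "{e. e \<subseteq> V \<and> card e = 2 \<and> e \<inter> W \<noteq> {}} = cross_pairs \<union> inside"
    unfolding V_def W_def inside_def by (rule pairs_meeting_small_blocks)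
  moreover have "cross_pairs \<inter> inside = {}"
    unfolding cross_pairs_def inside_def small_blocks_def by blast
  moreover have "card inside = card small_blocks * (4 choose 2)"
    unfolding inside_def
  proof (rule card_pairs_within_disjoint_family)
    show "finite small_blocks"
      using finite_P unfolding small_blocks_def by simp
    show "pairwise disjnt small_blocks"
      using P_disjoint unfolding small_blocks_def pairwise_def disjnt_def by blast
    show "finite j \<and> card j = 4" if "j \<in> small_blocks" for j
      using that P_blocks block unfolding small_blocks_def by blast
  qed
  moreover have "finite {e. e \<subseteq> V \<and> card e = 2 \<and> e \<inter> W \<noteq> {}}"
    using finite_covered unfolding V_def by simp
  ultimately show ?thesis
    using card_pairs_meeting[OF _ \<open>W \<subseteq> V\<close>] finite_covered card_V card_VW
    by (simp add: card_Un_disjoint V_def choose_two)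
qed

lemma block_contains_cross_pair:
  assumes "B \<in> \<B>" "B \<inter> centres = {}" "\<forall>j\<in>small_blocks. B \<notin> confined j"
  shows "\<exists>e\<in>cross_pairs. e \<subseteq> B"
proof -
  obtain j y where j: "j \<in> small_blocks" "y \<in> B" "y \<in> j"
    using block_avoiding_centres_meets_small[OF assms(1,2)] by blast
  then have "j \<in> P"
    unfolding small_blocks_def by blast
  obtain z where z: "z \<in> B" "z \<in> covered" "z \<notin> j"
    using assms(1,3) j(1) unfolding confined_def by blast
  have "y \<noteq> z"
    using j(3) z(3) by auto
  have "y \<in> covered"
    using \<open>j \<in> P\<close> j(3) unfolding covered_def by blast
  have "\<not> {y, z} \<subseteq> i" if "i \<in> P" for i
  proof
    assume "{y, z} \<subseteq> i"
    then have "i \<inter> j \<noteq> {}"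
      using j(3) by blast
    then have "i = j"
      using P_disjoint[of i j] that \<open>j \<in> P\<close> by auto
    then show False
      using \<open>{y, z} \<subseteq> i\<close> z(3) by blast
  qed
  then have "{y, z} \<in> cross_pairs"
    using assms(2) j z \<open>y \<noteq> z\<close> \<open>y \<in> covered\<close> unfolding cross_pairs_def by auto
  moreover have "{y, z} \<subseteq> B"
    using j(2) z(1) by simp
  ultimately show ?thesis
    by blast
qed

lemma finite_cross_pairs: "finite cross_pairs"
proof (rule finite_subset)
  show "cross_pairs \<subseteq> Pow covered"
    unfolding cross_pairs_def by blast
  show "finite (Pow covered)"
    using finite_covered by simp
qed

lemma card_blocks_containing_cross_pair_le:
  "card {B\<in>\<B>. B \<inter> centres = {} \<and> (\<forall>j\<in>small_blocks. B \<notin> confined j)} \<le> card cross_pairs"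
  (is "card ?R \<le> _")
proof (rule card_le_card_disjoint_witnesses[where T = Pow])
  show "Pow B \<inter> cross_pairs \<noteq> {}" if B: "B \<in> ?R" for B
  proof -
    obtain e where "e \<in> cross_pairs" "e \<subseteq> B"
      using block_contains_cross_pair[of B] B by auto
    then show ?thesis
      by blast
  qed
  show "Pow B \<inter> Pow B' \<inter> cross_pairs = {}" if "B \<in> ?R" "B' \<in> ?R" "B \<noteq> B'" for B B'
  proof (rule equals0I)
    fix e assume "e \<in> Pow B \<inter> Pow B' \<inter> cross_pairs"
    then have "e \<subseteq> B \<inter> B'" "card e = 2"
      unfolding cross_pairs_def by auto
    moreover have "finite (B \<inter> B')"
      using block that(1) by blast
    ultimately have "2 \<le> card (B \<inter> B')"
      by (metis card_mono)
    then show False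
      using packing_card_Int_le_1[OF packing, of B B'] that by simp
  qed
qed (rule finite_cross_pairs)

lemma card_blocks_avoiding_centres:
  "card {B\<in>\<B>. B \<inter> centres = {}} \<le> 13 * card small_blocks + card cross_pairs"
proof -
  define H where "H = {B\<in>\<B>. B \<inter> centres = {} \<and> (\<exists>j\<in>small_blocks. B \<in> confined j)}"
  define R where "R = {B\<in>\<B>. B \<inter> centres = {} \<and> (\<forall>j\<in>small_blocks. B \<notin> confined j)}"
  have "finite small_blocks"
    using finite_P unfolding small_blocks_def by simp
  have "card H \<le> card (\<Union>j\<in>small_blocks. confined j)"
    unfolding H_def using \<open>finite small_blocks\<close> finite_blocks
    by (intro card_mono) (auto simp: confined_def)
  also have "\<dots> \<le> (\<Sum>j\<in>small_blocks. card (confined j))"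
    using \<open>finite small_blocks\<close> by (rule card_UN_le)
  also have "\<dots> \<le> (\<Sum>j\<in>small_blocks. 13)"
    using card_confined_le_13 unfolding small_blocks_def by (intro sum_mono) blast
  finally have "card H \<le> 13 * card small_blocks"
    by simp
  moreover have "card R \<le> card cross_pairs"
    unfolding R_def by (rule card_blocks_containing_cross_pair_le)
  moreover have "{B\<in>\<B>. B \<inter> centres = {}} = H \<union> R"
    unfolding H_def R_def by blast
  then have "card {B\<in>\<B>. B \<inter> centres = {}} \<le> card H + card R"
    by (simp add: card_Un_le)
  ultimately show ?thesis
    by linarith
qed

lemma card_cross_pairs_eq:
  assumes "a = int (card large_blocks)" "s = int (card small_blocks)"
  shows "int (card cross_pairs) = 12 * a * s + 8 * s^2 - 8 * s"
proof -
  have "int (card cross_pairs) + 6 * s + int (3 * card large_blocks choose 2)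
      = int ((3 * card large_blocks + 4 * card small_blocks) choose 2)"
    using arg_cong[OF card_cross_pairs, of int] assms(2) by simp
  moreover have "2 * int (3 * card large_blocks choose 2) = 3 * a * (3 * a - 1)"
    using int_choose_two[of "3 * card large_blocks"] assms(1) by simp
  moreover have "2 * int ((3 * card large_blocks + 4 * card small_blocks) choose 2)
      = (3 * a + 4 * s) * (3 * a + 4 * s - 1)"
    using int_choose_two[of "3 * card large_blocks + 4 * card small_blocks"] assms by simp
  ultimately have "2 * int (card cross_pairs) = (3 * a + 4 * s) * (3 * a + 4 * s - 1) - 3 * a * (3 * a - 1) - 12 * s"
    by linarith
  also have "\<dots> = 2 * (12 * a * s + 8 * s^2 - 8 * s)"
    by (simp add: power2_eq_square algebra_simps)
  finally show ?thesis
    by simp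
qed

lemma card_blocks_bound:
  assumes "a = int (card large_blocks)" "s = int (card small_blocks)"
  shows "6 * int (card \<B>) \<le> a * (2 * int v - 1 - a) + 6 * (13 * s + 12 * a * s + 8 * s^2 - 8 * s)"
proof -
  have "centres \<subseteq> X"
    using centres_subset_covered P_blocks block unfolding covered_def by blast
  then have "6 * int (card {B\<in>\<B>. B \<inter> centres \<noteq> {}}) \<le> a * (2 * int v - 1 - a)"
    using packing_card_blocks_meeting[OF packing \<open>centres \<subseteq> X\<close>] card_centres assms(1) by simp
  moreover have "int (card {B\<in>\<B>. B \<inter> centres = {}}) \<le> 13 * s + 12 * a * s + 8 * s^2 - 8 * s"
    using card_blocks_avoiding_centres card_cross_pairs_eq[OF assms] assms(2) by linarith
  moreover have "card \<B> = card ({B\<in>\<B>. B \<inter> centres \<noteq> {}} \<union> {B\<in>\<B>. B \<inter> centres = {}})"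
    by (rule arg_cong[where f = card]) blast
  then have "int (card \<B>) = int (card {B\<in>\<B>. B \<inter> centres \<noteq> {}}) + int (card {B\<in>\<B>. B \<inter> centres = {}})"
    using finite_blocks by (simp add: card_Un_disjoint disjoint_iff)
  ultimately show ?thesis
    by (smt (verit))
qed

end

lemma count_bound_arith:
  fixes a s v :: int
  assumes "0 \<le> a" "0 \<le> s" "1 \<le> a + s" "27 * (a + s)^2 - 3 * (a + s) + 60 \<le> 2 * v"
  shows "a * (2 * v - 1 - a) + 6 * (13 * s + 12 * a * s + 8 * s^2 - 8 * s)
           \<le> 2 * (a + s) * v - (a + s)^2 - (a + s)"
proof -
  have "0 \<le> 27 * (a + s)^2 - 77 * (a + s) + 54"
  proof -
    consider "a + s = 1" | "a + s = 2" | "a + s \<ge> 3"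
      using assms(3) by linarith
    then show ?thesis
    proof cases
      case 3
      then have "0 \<le> (a + s) * (27 * (a + s) - 77)"
        by (intro mult_nonneg_nonneg) auto
      then show ?thesis
        by (simp add: power2_eq_square algebra_simps)
    qed simp_all
  qed
  (* the right-hand side minus the left-hand side is s * (2 * v - 74 * a - 49 * s - 31) *)
  then have "0 \<le> s * (2 * v - 74 * a - 49 * s - 31)"
    using assms by (cases "s = 0") (auto intro!: mult_nonneg_nonneg)
  then show ?thesis
    by (simp add: power2_eq_square algebra_simps)
qed

theorem theorem3p22:
  fixes X :: "'a set" and \<B> :: "'a set set" and v \<rho> :: nat
  assumes "\<rho> \<ge> 1"
    and "2 * real v \<ge> 27 * real \<rho>^2 - 3 * real \<rho> + 60"
    and "packing v 4 X \<B>"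
    and "max_ppc_size \<B> \<rho>"
  shows "real (card \<B>) \<le> real \<rho> * real v / 3 - real \<rho> * (real \<rho> + 1) / 6"
proof -
  obtain P where P: "ppc \<B> P" "finite P" "card P = \<rho>"
    using assms(4) unfolding max_ppc_size_def by blast
  interpret max_ppc_packing X \<B> v \<rho> P
    using assms(3,4) P by unfold_locales
  define a where "a = int (card large_blocks)"
  define s where "s = int (card small_blocks)"
  have "a + s = int \<rho>"
    using card_large_small unfolding a_def s_def by (metis of_nat_add)
  moreover have "real_of_int (27 * int \<rho>^2 - 3 * int \<rho> + 60) \<le> real_of_int (2 * int v)"
    using assms(2) by simp
  then have "27 * int \<rho>^2 - 3 * int \<rho> + 60 \<le> 2 * int v"
    by (simp only: of_int_le_iff)
  ultimately have "6 * int (card \<B>) \<le> 2 * int \<rho> * int v - int \<rho>^2 - int \<rho>"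
    using card_blocks_bound[OF a_def s_def] count_bound_arith[of a s "int v"] assms(1)
    unfolding a_def s_def by simp
  then have "real_of_int (6 * int (card \<B>)) \<le> real_of_int (2 * int \<rho> * int v - int \<rho>^2 - int \<rho>)"
    by (simp only: of_int_le_iff)
  then show ?thesis
    by (simp add: field_simps power2_eq_square)
qed

end
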